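(* For every integer $k\ge 3$, the consensus number of the $\text{WRN}_{k}$ object is $1$.
   Context: A $\text{WRN}_{k}$ (Write and Read Next) object is a deterministic atomic shared object with a single operation $\texttt{WRN}(i,v)$, where $i\in\{0,\dots,k-1\}$ and $v\neq\bot$. Its state consists of $k$ values $A[0],\dots,A[k-1]$, initially all $\bot$; the operation $\texttt{WRN}(i,v)$ atomically sets $A[i]\gets v$ and returns $A[(i+1)\bmod k]$. Model: asynchronous shared memory, processes communicate by atomic operations on shared objects and may crash. Consensus task: each process has an input; every non-faulty process outputs a value such that every output is some process's input and all outputs are equal. An object has consensus number $n$ if there is a wait-free algorithm using only copies of the object and read-write registers solving consensus for $n$ processes, but no such algorithm for $n+1$ processes (wait-free: each non-crashed process outputs within finitely many of its own steps). *)

theory Defs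
  imports Main
begin

text \<open>Processes are numbered 0,...,n-1.
Shared objects are indexed by nat; each object is either a read-write register
or a copy of the WRN_k object. The contents of an object are a function
nat => 'v option (None = bottom); a register uses only index 0, a WRN_k object
uses the indices 0..k-1.\<close>

datatype 'v operation = Read | Write 'v | WRN nat 'v

datatype ('a, 'v) action = Decide 'a | Invoke nat "'v operation"

record ('a, 's, 'v) protocol =
  init    :: "nat \<Rightarrow> 'a \<Rightarrow> 's"
  act     :: "nat \<Rightarrow> 's \<Rightarrow> ('a, 'v) action"
  upd     :: "nat \<Rightarrow> 's \<Rightarrow> 'v option \<Rightarrow> 's"
  isWRN   :: "nat \<Rightarrow> bool"
  reginit :: "nat \<Rightarrow> 'v option"

fun apply_op :: "nat \<Rightarrow> bool \<Rightarrow> (nat \<Rightarrow> 'v option) \<Rightarrow> 'v operation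
                 \<Rightarrow> (nat \<Rightarrow> 'v option) \<times> 'v option" where
  "apply_op k False m Read = (m, m 0)"
| "apply_op k False m (Write v) = (m(0 := Some v), None)"
| "apply_op k True m (WRN i v) = (m(i := Some v), m ((i + 1) mod k))"
| "apply_op k _ m _ = (m, None)"

definition well_formed :: "nat \<Rightarrow> ('a, 's, 'v) protocol \<Rightarrow> bool" where
  "well_formed k P \<longleftrightarrow>
     (\<forall>p s obj op. act P p s = Invoke obj op \<longrightarrow>
        (if isWRN P obj then (\<exists>i v. op = WRN i v \<and> i < k)
         else (op = Read \<or> (\<exists>v. op = Write v))))"

type_synonym ('s, 'v) config = "(nat \<Rightarrow> 's) \<times> (nat \<Rightarrow> nat \<Rightarrow> 'v option)"

definition initial :: "('a, 's, 'v) protocol \<Rightarrow> (nat \<Rightarrow> 'a) \<Rightarrow> ('s, 'v) config" where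
  "initial P inp = ((\<lambda>p. init P p (inp p)),
                    (\<lambda>obj j. if isWRN P obj then None else reginit P obj))"

definition step :: "nat \<Rightarrow> ('a, 's, 'v) protocol \<Rightarrow> ('s, 'v) config \<Rightarrow> nat \<Rightarrow> ('s, 'v) config" where
  "step k P C p =
     (case act P p (fst C p) of
        Decide a \<Rightarrow> C
      | Invoke obj op \<Rightarrow>
          (let (m', r) = apply_op k (isWRN P obj) (snd C obj) op
           in ((fst C)(p := upd P p (fst C p) r), (snd C)(obj := m'))))"

definition exec :: "nat \<Rightarrow> ('a, 's, 'v) protocol \<Rightarrow> (nat \<Rightarrow> 'a) \<Rightarrow> nat list \<Rightarrow> ('s, 'v) config" where
  "exec k P inp xs = foldl (step k P) (initial P inp) xs"

definition decision :: "('a, 's, 'v) protocol \<Rightarrow> ('s, 'v) config \<Rightarrow> nat \<Rightarrow> 'a option" where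
  "decision P C p = (case act P p (fst C p) of Decide a \<Rightarrow> Some a | Invoke _ _ \<Rightarrow> None)"

text \<open>Wait-freedom: in every infinite schedule over the n processes (processes that
stop being scheduled have crashed), every process taking infinitely many steps decides.\<close>
definition wait_free :: "nat \<Rightarrow> nat \<Rightarrow> ('a, 's, 'v) protocol \<Rightarrow> (nat \<Rightarrow> 'a) \<Rightarrow> bool" where
  "wait_free k n P inp \<longleftrightarrow>
     (\<forall>\<sigma> :: nat \<Rightarrow> nat. (\<forall>i. \<sigma> i < n) \<longrightarrow>
        (\<forall>p<n. infinite {i. \<sigma> i = p} \<longrightarrow>
           (\<exists>j. decision P (exec k P inp (map \<sigma> [0..<j])) p \<noteq> None)))"

definition solves_consensus :: "nat \<Rightarrow> nat \<Rightarrow> ('a, 's, 'v) protocol \<Rightarrow> bool" where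
  "solves_consensus k n P \<longleftrightarrow> well_formed k P \<and>
     (\<forall>inp :: nat \<Rightarrow> 'a.
        wait_free k n P inp \<and>
        (\<forall>xs. set xs \<subseteq> {..<n} \<longrightarrow>
           (\<forall>p<n. \<forall>q<n. \<forall>a b.
              decision P (exec k P inp xs) p = Some a \<longrightarrow>
              decision P (exec k P inp xs) q = Some b \<longrightarrow>
              a = b \<and> (\<exists>r<n. inp r = a))))"

end

theory Submission
  imports Defs
begin

(* A single process simply decides its own input. For two processes we run the valency argument
   of Fischer, Lynch and Paterson. With distinct inputs the empty schedule is bivalent, and since
   wait-freedom excludes an infinite schedule all of whose prefixes are bivalent, there is a
   critical bivalent schedule both of whose one-step extensions are univalent, with opposite
   values. The two pending operations then race: for registers, and for WRN_k with k >= 3, one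
   process cannot tell some continuation of the one extension from some continuation of the
   other, and its solo run decides the same value from both -- a contradiction.
   For WRN(i,v) and WRN(j,w) on one object: if i = j the second write hides the first; if j is
   the successor of i, the WRN(j,w) process reads cell j + 1 in either order, and j + 1 differs
   from i exactly because k >= 3; symmetrically if i is the successor of j; otherwise neither
   operation reads the cell the other writes, so they commute. *)

lemma step_Decide: "act P p (fst C p) = Decide a \<Longrightarrow> step k P C p = C"
  by (simp add: step_def)

lemma step_Invoke:
  assumes "act P p (fst C p) = Invoke obj op"
    and "apply_op k (isWRN P obj) (snd C obj) op = (m, r)"
  shows "step k P C p = ((fst C)(p := upd P p (fst C p) r), (snd C)(obj := m))"
  using assms by (simp add: step_def)

lemma step_other_state: "q \<noteq> p \<Longrightarrow> fst (step k P C q) p = fst C p"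
  by (auto simp: step_def Let_def split: action.split prod.split)

lemma decision_step:
  assumes "decision P C p = Some a"
  shows "decision P (step k P C q) p = Some a"
proof (cases "q = p")
  case True
  from assms have "act P p (fst C p) = Decide a"
    by (auto simp: decision_def split: action.splits)
  with True assms show ?thesis by (simp add: step_Decide)
next
  case False
  with assms show ?thesis by (simp add: decision_def step_other_state)
qed

lemma decision_foldl_step:
  "decision P C p = Some a \<Longrightarrow> decision P (foldl (step k P) C ys) p = Some a"
  by (induction ys arbitrary: C) (simp_all add: decision_step)

lemma exec_append: "exec k P inp (xs @ ys) = foldl (step k P) (exec k P inp xs) ys"
  by (simp add: exec_def)

lemma decision_exec_append:
  "decision P (exec k P inp xs) p = Some a \<Longrightarrow> decision P (exec k P inp (xs @ ys)) p = Some a"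
  by (simp add: exec_append decision_foldl_step)

definition indistinguishable :: "nat \<Rightarrow> ('s, 'v) config \<Rightarrow> ('s, 'v) config \<Rightarrow> bool" where
  "indistinguishable p C D \<longleftrightarrow> fst C p = fst D p \<and> snd C = snd D"

lemma indistinguishable_decision:
  "indistinguishable p C D \<Longrightarrow> decision P C p = decision P D p"
  by (simp add: indistinguishable_def decision_def)

lemma indistinguishable_step:
  assumes "indistinguishable q C D"
  shows "indistinguishable q (step k P C q) (step k P D q)"
proof (cases "act P q (fst C q)")
  case (Decide a)
  with assms show ?thesis
    by (simp add: step_Decide indistinguishable_def)
next
  case (Invoke obj op)
  obtain m r where "apply_op k (isWRN P obj) (snd C obj) op = (m, r)"
    by (cases "apply_op k (isWRN P obj) (snd C obj) op")
  with Invoke assms show ?thesis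
    by (simp add: step_Invoke indistinguishable_def)
qed

lemma indistinguishable_solo:
  "indistinguishable q C D \<Longrightarrow>
   indistinguishable q (foldl (step k P) C (replicate m q)) (foldl (step k P) D (replicate m q))"
  by (induction m arbitrary: C D) (simp_all add: indistinguishable_step)

lemma solo_run_decides:
  assumes "wait_free k n P inp" and "set xs \<subseteq> {..<n}" and "p < n"
  shows "\<exists>m a. decision P (exec k P inp (xs @ replicate m p)) p = Some a"
proof -
  define \<sigma> where "\<sigma> i = (if i < length xs then xs ! i else p)" for i
  have "\<forall>i. \<sigma> i < n"
    using assms(2,3) by (auto simp: \<sigma>_def dest: nth_mem)
  moreover have "{length xs..} \<subseteq> {i. \<sigma> i = p}"
    by (auto simp: \<sigma>_def)
  then have "infinite {i. \<sigma> i = p}"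
    using infinite_Ici by (rule infinite_super)
  ultimately obtain j a where j: "decision P (exec k P inp (map \<sigma> [0..<j])) p = Some a"
    using assms(1,3) unfolding wait_free_def by blast
  show ?thesis
  proof (cases "j \<le> length xs")
    case True
    then have "map \<sigma> [0..<j] = take j xs"
      by (intro nth_equalityI) (auto simp: \<sigma>_def)
    with j have "decision P (exec k P inp (xs @ replicate 0 p)) p = Some a"
      by (metis append_Nil2 append_take_drop_id decision_exec_append replicate_0)
    then show ?thesis by blast
  next
    case False
    then have "map \<sigma> [0..<j] = xs @ replicate (j - length xs) p"
      by (intro nth_equalityI) (auto simp: \<sigma>_def nth_append)
    with j show ?thesis by metis
  qed
qed

definition valid_op :: "nat \<Rightarrow> bool \<Rightarrow> 'v operation \<Rightarrow> bool" where
  "valid_op k w op \<longleftrightarrow>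
     (if w then \<exists>i v. op = WRN i v \<and> i < k else op = Read \<or> (\<exists>v. op = Write v))"

lemma well_formed_valid_op:
  "well_formed k P \<Longrightarrow> act P p s = Invoke obj op \<Longrightarrow> valid_op k (isWRN P obj) op"
  unfolding well_formed_def valid_op_def by blast

lemma Suc_mod_neq_self: "i < k \<Longrightarrow> 2 \<le> k \<Longrightarrow> (i + 1) mod k \<noteq> (i::nat)"
  by (cases "i + 1 = k") auto

lemma Suc_Suc_mod_neq_self: "i < k \<Longrightarrow> 3 \<le> k \<Longrightarrow> ((i + 1) mod k + 1) mod k \<noteq> (i::nat)"
  by (cases "i + 1 = k"; cases "i + 2 = k") auto

text \<open>With process \<open>p\<close> applying \<open>op0\<close> and process \<open>q\<close> applying \<open>op1\<close>, the four disjuncts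
  say: \<open>p\<close> cannot tell the order of the two operations; \<open>q\<close> does not see the operation of
  \<open>p\<close>; \<open>p\<close> does not see the operation of \<open>q\<close>; \<open>q\<close> cannot tell the order.\<close>

lemma apply_op_race:
  assumes k: "3 \<le> k" and ops: "valid_op k w op0" "valid_op k w op1"
    and a0: "apply_op k w m op0 = (m0, r0)" and a1: "apply_op k w m op1 = (m1, r1)"
    and a01: "apply_op k w m0 op1 = (m01, r01)" and a10: "apply_op k w m1 op0 = (m10, r10)"
  shows "(r0 = r10 \<and> m01 = m10) \<or> (r01 = r1 \<and> m01 = m1) \<or> (r10 = r0 \<and> m10 = m0) \<or>
         (r01 = r1 \<and> m01 = m10)"
proof (cases w)
  case False
  with ops consider "op0 = Read" | "op1 = Read" | v0 v1 where "op0 = Write v0" "op1 = Write v1"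
    by (auto simp: valid_op_def)
  then show ?thesis
    by cases (use False a0 a1 a01 a10 in auto)
next
  case True
  with ops obtain i v j u where ij: "op0 = WRN i v" "i < k" "op1 = WRN j u" "j < k"
    by (auto simp: valid_op_def)
  from True ij a0 a1 a01 a10 have m:
    "m0 = m(i := Some v)" "r0 = m ((i + 1) mod k)" "m1 = m(j := Some u)" "r1 = m ((j + 1) mod k)"
    "m01 = m0(j := Some u)" "r01 = m0 ((j + 1) mod k)" "m10 = m1(i := Some v)" "r10 = m1 ((i + 1) mod k)"
    by auto
  have i: "(i + 1) mod k \<noteq> i" "((i + 1) mod k + 1) mod k \<noteq> i"
    and j: "(j + 1) mod k \<noteq> j" "((j + 1) mod k + 1) mod k \<noteq> j"
    using ij k Suc_mod_neq_self Suc_Suc_mod_neq_self by auto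
  consider "i = j" | "j = (i + 1) mod k" | "i = (j + 1) mod k"
    | "i \<noteq> j" "j \<noteq> (i + 1) mod k" "i \<noteq> (j + 1) mod k"
    by blast
  then show ?thesis
  proof cases
    case 1
    with i show ?thesis by (simp add: m)
  next
    case 2
    with i have "i \<noteq> j" "(j + 1) mod k \<noteq> i" by auto
    then show ?thesis by (simp add: m fun_upd_twist)
  next
    case 3
    with j have "i \<noteq> j" "(i + 1) mod k \<noteq> j" by auto
    then show ?thesis by (simp add: m fun_upd_twist)
  next
    case 4
    then show ?thesis by (simp add: m fun_upd_twist)
  qed
qed

lemma race_indistinguishable:
  assumes wf: "well_formed k P" and k: "3 \<le> k" and pq: "p \<noteq> q"
    and act_p: "act P p (fst C p) = Invoke obj0 op0"
    and act_q: "act P q (fst C q) = Invoke obj1 op1"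
  defines "Cp \<equiv> step k P C p" and "Cq \<equiv> step k P C q"
    and "Cpq \<equiv> step k P (step k P C p) q" and "Cqp \<equiv> step k P (step k P C q) p"
  shows "indistinguishable p Cpq Cqp \<or> indistinguishable q Cpq Cq \<or>
         indistinguishable p Cp Cqp \<or> indistinguishable q Cpq Cqp"
proof -
  obtain F M where C: "C = (F, M)" by fastforce
  obtain m0 r0 where a0: "apply_op k (isWRN P obj0) (M obj0) op0 = (m0, r0)" by fastforce
  obtain m1 r1 where a1: "apply_op k (isWRN P obj1) (M obj1) op1 = (m1, r1)" by fastforce
  obtain m01 r01 where a01: "apply_op k (isWRN P obj1) ((M(obj0 := m0)) obj1) op1 = (m01, r01)"
    by fastforce
  obtain m10 r10 where a10: "apply_op k (isWRN P obj0) ((M(obj1 := m1)) obj0) op0 = (m10, r10)"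
    by fastforce
  have Cp: "Cp = (F(p := upd P p (F p) r0), M(obj0 := m0))"
    using act_p a0 by (simp add: Cp_def C step_Invoke)
  have Cq: "Cq = (F(q := upd P q (F q) r1), M(obj1 := m1))"
    using act_q a1 by (simp add: Cq_def C step_Invoke)
  have Cpq: "Cpq = ((F(p := upd P p (F p) r0))(q := upd P q (F q) r01), (M(obj0 := m0))(obj1 := m01))"
    unfolding Cpq_def unfolding Cp_def[symmetric]
    using step_Invoke[of P q Cp obj1 op1 k m01 r01] act_q a01 pq by (simp add: Cp C)
  have Cqp: "Cqp = ((F(q := upd P q (F q) r1))(p := upd P p (F p) r10), (M(obj1 := m1))(obj0 := m10))"
    unfolding Cqp_def unfolding Cq_def[symmetric]
    using step_Invoke[of P p Cq obj0 op0 k m10 r10] act_p a10 pq by (simp add: Cq C)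
  show ?thesis
  proof (cases "obj0 = obj1")
    case True
    have "valid_op k (isWRN P obj0) op0" "valid_op k (isWRN P obj0) op1"
      using wf act_p act_q True by (auto intro: well_formed_valid_op)
    moreover have "apply_op k (isWRN P obj0) (M obj0) op1 = (m1, r1)"
      "apply_op k (isWRN P obj0) m0 op1 = (m01, r01)" "apply_op k (isWRN P obj0) m1 op0 = (m10, r10)"
      using True a1 a01 a10 by simp_all
    ultimately have "(r0 = r10 \<and> m01 = m10) \<or> (r01 = r1 \<and> m01 = m1) \<or>
        (r10 = r0 \<and> m10 = m0) \<or> (r01 = r1 \<and> m01 = m10)"
      using apply_op_race[OF k _ _ a0] by blast
    with True pq show ?thesis
      by (auto simp: Cp Cq Cpq Cqp indistinguishable_def)
  next
    case False
    with a0 a1 a01 a10 have "m01 = m1" "r01 = r1" "m10 = m0" "r10 = r0" by auto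
    with False pq show ?thesis
      by (simp add: Cpq Cqp indistinguishable_def fun_upd_twist)
  qed
qed

definition reachable_value :: "nat \<Rightarrow> ('a, 's, 'v) protocol \<Rightarrow> (nat \<Rightarrow> 'a) \<Rightarrow> nat list \<Rightarrow> 'a \<Rightarrow> bool"
  where "reachable_value k P inp xs a \<longleftrightarrow>
    (\<exists>ys p. set ys \<subseteq> {..<2} \<and> p < 2 \<and> decision P (exec k P inp (xs @ ys)) p = Some a)"

definition bivalent :: "nat \<Rightarrow> ('a, 's, 'v) protocol \<Rightarrow> (nat \<Rightarrow> 'a) \<Rightarrow> nat list \<Rightarrow> bool" where
  "bivalent k P inp xs \<longleftrightarrow>
    (\<exists>a b. a \<noteq> b \<and> reachable_value k P inp xs a \<and> reachable_value k P inp xs b)"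

lemma reachable_valueI:
  "set ys \<subseteq> {..<2} \<Longrightarrow> p < 2 \<Longrightarrow> decision P (exec k P inp (xs @ ys)) p = Some a \<Longrightarrow>
   reachable_value k P inp xs a"
  unfolding reachable_value_def by blast

lemma reachable_value_append:
  "reachable_value k P inp (xs @ us) a \<Longrightarrow> set us \<subseteq> {..<2} \<Longrightarrow> reachable_value k P inp xs a"
  unfolding reachable_value_def by (metis append.assoc set_append Un_subset_iff)

lemma reachable_value_successor:
  assumes "reachable_value k P inp xs a"
  shows "\<exists>r<2. reachable_value k P inp (xs @ [r]) a"
proof -
  obtain ys p where ys: "set ys \<subseteq> {..<2}" "p < 2" "decision P (exec k P inp (xs @ ys)) p = Some a"
    using assms unfolding reachable_value_def by blast
  show ?thesis
  proof (cases ys)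
    case Nil
    with ys have "decision P (exec k P inp ((xs @ [0]) @ [])) p = Some a"
      by (metis append.assoc append_Nil2 decision_exec_append)
    with ys(2) have "reachable_value k P inp (xs @ [0]) a"
      using reachable_valueI[where ys = "[]" and xs = "xs @ [0]"] by simp
    then show ?thesis by (auto intro!: exI[of _ 0])
  next
    case (Cons r ys')
    with ys show ?thesis by (auto intro!: exI[of _ r] reachable_valueI[of ys' p])
  qed
qed

lemma infinite_sequence_by_extension:
  assumes "Q []" and "\<And>xs. set xs \<subseteq> A \<Longrightarrow> Q xs \<Longrightarrow> \<exists>a\<in>A. Q (xs @ [a])"
  shows "\<exists>\<sigma>. (\<forall>i. \<sigma> i \<in> A) \<and> (\<forall>j. Q (map \<sigma> [0..<j]))"
proof -
  define g where "g xs = (SOME a. a \<in> A \<and> Q (xs @ [a]))" for xs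
  define f where "f = rec_nat [] (\<lambda>_ ys. ys @ [g ys])"
  have f0: "f 0 = []" and fSuc: "f (Suc n) = f n @ [g (f n)]" for n
    by (simp_all add: f_def)
  have g: "g xs \<in> A \<and> Q (xs @ [g xs])" if "set xs \<subseteq> A" "Q xs" for xs
    unfolding g_def using assms(2)[OF that] by (rule someI_ex[OF bexE]) blast
  have f: "set (f n) \<subseteq> A \<and> Q (f n)" for n
    by (induction n) (use assms(1) g in \<open>auto simp: f0 fSuc\<close>)
  have "map (\<lambda>i. g (f i)) [0..<j] = f j" for j
    by (induction j) (simp_all add: f0 fSuc)
  with f g show ?thesis by metis
qed

context
  fixes k :: nat and P :: "('a, 's, 'v) protocol" and inp :: "nat \<Rightarrow> 'a"
  assumes consensus: "solves_consensus k 2 P"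
begin

lemma consensus_agreement:
  assumes "set xs \<subseteq> {..<2}" "p < 2" "q < 2"
    and "decision P (exec k P inp' xs) p = Some a" "decision P (exec k P inp' xs) q = Some b"
  shows "a = b \<and> (\<exists>r<2. inp' r = a)"
  using consensus assms unfolding solves_consensus_def by blast

lemma consensus_solo_run_decides:
  "set xs \<subseteq> {..<2} \<Longrightarrow> p < 2 \<Longrightarrow>
   \<exists>m a. decision P (exec k P inp' (xs @ replicate m p)) p = Some a"
  using consensus solo_run_decides unfolding solves_consensus_def by blast

lemma reachable_value_exists:
  assumes "set xs \<subseteq> {..<2}"
  obtains a where "reachable_value k P inp xs a"
proof -
  obtain m a where "decision P (exec k P inp (xs @ replicate m 0)) 0 = Some a"
    using consensus_solo_run_decides[OF assms, of 0 inp] by auto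
  moreover have "set (replicate m (0::nat)) \<subseteq> {..<2}" by auto
  ultimately show thesis
    using that reachable_valueI zero_less_numeral by metis
qed

lemma reachable_value_decided:
  assumes "set xs \<subseteq> {..<2}" "p < 2" "decision P (exec k P inp xs) p = Some a"
    and "reachable_value k P inp xs b"
  shows "b = a"
proof -
  obtain ys q where ys: "set ys \<subseteq> {..<2}" "q < 2" "decision P (exec k P inp (xs @ ys)) q = Some b"
    using assms(4) unfolding reachable_value_def by blast
  with assms(1-3) show ?thesis
    using consensus_agreement[of "xs @ ys" p q inp a b] decision_exec_append by fastforce
qed

lemma bivalent_undecided:
  assumes "set xs \<subseteq> {..<2}" "bivalent k P inp xs" "p < 2"
  shows "decision P (exec k P inp xs) p = None"
proof (rule ccontr)
  assume "decision P (exec k P inp xs) p \<noteq> None"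
  then obtain d where "decision P (exec k P inp xs) p = Some d" by blast
  with assms show False
    unfolding bivalent_def by (metis reachable_value_decided)
qed

lemma indistinguishable_common_value:
  assumes "set ys \<subseteq> {..<2}" "set zs \<subseteq> {..<2}" "q < 2"
    and "indistinguishable q (exec k P inp ys) (exec k P inp zs)"
  shows "\<exists>b. reachable_value k P inp ys b \<and> reachable_value k P inp zs b"
proof -
  obtain m b where b: "decision P (exec k P inp (ys @ replicate m q)) q = Some b"
    using consensus_solo_run_decides[OF assms(1,3)] by blast
  have "indistinguishable q (exec k P inp (ys @ replicate m q)) (exec k P inp (zs @ replicate m q))"
    using indistinguishable_solo[OF assms(4)] by (simp add: exec_append)
  with b have b': "decision P (exec k P inp (zs @ replicate m q)) q = Some b"
    by (metis indistinguishable_decision)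
  have "set (replicate m q) \<subseteq> {..<2}"
    using assms(3) by auto
  with assms(3) b b' show ?thesis
    by (metis reachable_valueI)
qed

text \<open>Validity is applied to the input vector in which both processes have input \<open>inp p\<close>;
  process \<open>p\<close> cannot distinguish its solo run there from its solo run under \<open>inp\<close>.\<close>

lemma reachable_value_own_input:
  assumes p: "p < 2"
  shows "reachable_value k P inp [] (inp p)"
proof -
  define inp' where "inp' = (\<lambda>_::nat. inp p)"
  obtain m a where a: "decision P (exec k P inp' (replicate m p)) p = Some a"
    using consensus_solo_run_decides[of "[]" p inp'] p by auto
  moreover have rp: "set (replicate m p) \<subseteq> {..<2}"
    using p by auto
  ultimately have "a = inp p"
    using consensus_agreement[of "replicate m p" p p inp' a a] p by (auto simp: inp'_def)
  have "indistinguishable p (initial P inp') (initial P inp)"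
    by (auto simp: indistinguishable_def initial_def inp'_def)
  from indistinguishable_solo[OF this, of k P m]
  have "decision P (exec k P inp' (replicate m p)) p = decision P (exec k P inp ([] @ replicate m p)) p"
    unfolding exec_def append_Nil by (rule indistinguishable_decision)
  with a \<open>a = inp p\<close> have "decision P (exec k P inp ([] @ replicate m p)) p = Some (inp p)"
    by simp
  then show ?thesis
    by (rule reachable_valueI[OF rp p])
qed

lemma bivalent_initial:
  assumes "inp 0 \<noteq> inp 1"
  shows "bivalent k P inp []"
proof -
  have "reachable_value k P inp [] (inp 0)" "reachable_value k P inp [] (inp 1)"
    by (simp_all add: reachable_value_own_input)
  with assms show ?thesis
    unfolding bivalent_def by blast
qed

lemma critical_schedule_exists:
  assumes "inp 0 \<noteq> inp 1"
  shows "\<exists>xs. set xs \<subseteq> {..<2} \<and> bivalent k P inp xs \<and>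
    \<not> bivalent k P inp (xs @ [0]) \<and> \<not> bivalent k P inp (xs @ [1])"
proof (rule ccontr)
  assume no_critical: "\<not> ?thesis"
  have "\<exists>r\<in>{..<2}. bivalent k P inp (xs @ [r])"
    if "set xs \<subseteq> {..<2}" "bivalent k P inp xs" for xs
  proof (cases "bivalent k P inp (xs @ [0])")
    case True
    then show ?thesis by (intro bexI[of _ 0]) auto
  next
    case False
    with no_critical that have "bivalent k P inp (xs @ [1])" by blast
    then show ?thesis by (intro bexI[of _ 1]) auto
  qed
  with bivalent_initial[OF assms] obtain \<sigma> where
    \<sigma>: "\<forall>i. \<sigma> i \<in> {..<2}" and biv: "\<And>j. bivalent k P inp (map \<sigma> [0..<j])"
    using infinite_sequence_by_extension[of "bivalent k P inp" "{..<2}"] by blast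
  have "UNIV = {i. \<sigma> i = 0} \<union> {i. \<sigma> i = 1}"
    using \<sigma> by (auto simp: less_2_cases_iff)
  then have "infinite {i. \<sigma> i = 0} \<or> infinite {i. \<sigma> i = 1}"
    by (metis finite_Un infinite_UNIV_nat)
  then obtain p where p: "p < 2" "infinite {i. \<sigma> i = p}"
    by (auto intro: that[of 0] that[of 1])
  moreover have "wait_free k 2 P inp" and "\<forall>i. \<sigma> i < 2"
    using consensus \<sigma> by (auto simp: solves_consensus_def)
  ultimately obtain j where "decision P (exec k P inp (map \<sigma> [0..<j])) p \<noteq> None"
    unfolding wait_free_def by blast
  moreover have "set (map \<sigma> [0..<j]) \<subseteq> {..<2}"
    using \<sigma> by auto
  ultimately show False
    using bivalent_undecided[OF _ biv p(1)] by simp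
qed

lemma critical_successor_values:
  assumes "set xs \<subseteq> {..<2}" "bivalent k P inp xs"
    and "\<not> bivalent k P inp (xs @ [0])" "\<not> bivalent k P inp (xs @ [1])"
  obtains a0 a1 where "a0 \<noteq> a1"
    and "\<And>c. reachable_value k P inp (xs @ [0]) c \<Longrightarrow> c = a0"
    and "\<And>c. reachable_value k P inp (xs @ [1]) c \<Longrightarrow> c = a1"
proof -
  have "set (xs @ [0]) \<subseteq> {..<2}" "set (xs @ [1]) \<subseteq> {..<2}"
    using assms(1) by auto
  then obtain a0 a1 where a0: "reachable_value k P inp (xs @ [0]) a0"
    and a1: "reachable_value k P inp (xs @ [1]) a1"
    by (elim reachable_value_exists)
  have c0: "c = a0" if "reachable_value k P inp (xs @ [0]) c" for c
    using assms(3) a0 that unfolding bivalent_def by blast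
  have c1: "c = a1" if "reachable_value k P inp (xs @ [1]) c" for c
    using assms(4) a1 that unfolding bivalent_def by blast
  have "c = a0 \<or> c = a1" if c: "reachable_value k P inp xs c" for c
  proof -
    obtain r where "r < 2" and r: "reachable_value k P inp (xs @ [r]) c"
      using reachable_value_successor[OF c] by blast
    then have "r = 0 \<or> r = 1" by auto
    with r show ?thesis
      using c0 c1 by auto
  qed
  moreover from assms(2) obtain a b where "a \<noteq> b"
    "reachable_value k P inp xs a" "reachable_value k P inp xs b"
    unfolding bivalent_def by blast
  ultimately have "a0 \<noteq> a1" by blast
  from this c0 c1 show thesis by (rule that)
qed

lemma no_critical_schedule:
  assumes k: "3 \<le> k" and xs: "set xs \<subseteq> {..<2}" and biv: "bivalent k P inp xs"
    and "\<not> bivalent k P inp (xs @ [0])" "\<not> bivalent k P inp (xs @ [1])"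
  shows False
proof -
  obtain a0 a1 where "a0 \<noteq> a1"
    and a0: "\<And>c. reachable_value k P inp (xs @ [0]) c \<Longrightarrow> c = a0"
    and a1: "\<And>c. reachable_value k P inp (xs @ [1]) c \<Longrightarrow> c = a1"
    using critical_successor_values assms(2-) by blast
  have distinguishable: "\<not> indistinguishable q (exec k P inp (xs @ 0 # us0)) (exec k P inp (xs @ 1 # us1))"
    if "q < 2" "set us0 \<subseteq> {..<2}" "set us1 \<subseteq> {..<2}" for q us0 us1
  proof
    assume "indistinguishable q (exec k P inp (xs @ 0 # us0)) (exec k P inp (xs @ 1 # us1))"
    with that xs obtain c where
      "reachable_value k P inp ((xs @ [0]) @ us0) c" "reachable_value k P inp ((xs @ [1]) @ us1) c"
      using indistinguishable_common_value[of "xs @ 0 # us0" "xs @ 1 # us1" q] by auto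
    with that a0 a1 \<open>a0 \<noteq> a1\<close> show False
      by (metis reachable_value_append)
  qed
  define C where "C = exec k P inp xs"
  have "\<exists>obj op. act P p (fst C p) = Invoke obj op" if "p < 2" for p
    using bivalent_undecided[OF xs biv that]
    by (cases "act P p (fst C p)") (auto simp: C_def decision_def)
  then obtain obj0 op0 obj1 op1 where
    "act P 0 (fst C 0) = Invoke obj0 op0" "act P 1 (fst C 1) = Invoke obj1 op1"
    by fastforce
  moreover have "well_formed k P"
    using consensus unfolding solves_consensus_def by blast
  ultimately have "indistinguishable 0 (exec k P inp (xs @ [0, 1])) (exec k P inp (xs @ [1, 0])) \<or>
      indistinguishable 1 (exec k P inp (xs @ [0, 1])) (exec k P inp (xs @ [1])) \<or>
      indistinguishable 0 (exec k P inp (xs @ [0])) (exec k P inp (xs @ [1, 0])) \<or>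
      indistinguishable 1 (exec k P inp (xs @ [0, 1])) (exec k P inp (xs @ [1, 0]))"
    using race_indistinguishable[OF _ k, of P 0 1 C] by (simp add: C_def exec_append)
  then show False
    using distinguishable[of 0 "[1]" "[0]"] distinguishable[of 1 "[1]" "[]"]
      distinguishable[of 0 "[]" "[0]"] distinguishable[of 1 "[1]" "[0]"] by auto
qed

end

definition decide_input :: "('a, 'a, 'a) protocol" where
  "decide_input = \<lparr>init = (\<lambda>p a. a), act = (\<lambda>p s. Decide s), upd = (\<lambda>p s r. s),
     isWRN = (\<lambda>_. False), reginit = (\<lambda>_. None)\<rparr>"

lemma exec_decide_input: "exec k decide_input inp xs = initial decide_input inp"
  unfolding exec_def by (induction xs rule: rev_induct) (simp_all add: step_def decide_input_def)

lemma decide_input_solves_consensus: "solves_consensus k 1 decide_input"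
proof -
  have "decision decide_input (exec k decide_input inp xs) p = Some (inp p)"
    for inp :: "nat \<Rightarrow> 'a" and xs p
    unfolding exec_decide_input by (simp add: decision_def initial_def decide_input_def)
  moreover have "well_formed k decide_input"
    by (simp add: well_formed_def decide_input_def)
  ultimately show ?thesis
    by (auto simp: solves_consensus_def wait_free_def)
qed

theorem corollary2:
  fixes k :: nat
  assumes "k \<ge> 3" and "\<exists>x y :: 'a. x \<noteq> y"
  shows "(\<exists>P :: ('a, 'a, 'a) protocol. solves_consensus k 1 P) \<and>
         (\<forall>P :: ('a, 's, 'v) protocol. \<not> solves_consensus k 2 P)"
proof
  show "\<exists>P :: ('a, 'a, 'a) protocol. solves_consensus k 1 P"
    using decide_input_solves_consensus by blast
next
  show "\<forall>P :: ('a, 's, 'v) protocol. \<not> solves_consensus k 2 P"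
  proof (intro allI notI)
    fix P :: "('a, 's, 'v) protocol"
    assume consensus: "solves_consensus k 2 P"
    obtain x y :: 'a where "x \<noteq> y" using assms(2) by blast
    define inp :: "nat \<Rightarrow> 'a" where "inp i = (if i = 0 then x else y)" for i
    have "inp 0 \<noteq> inp 1" using \<open>x \<noteq> y\<close> by (simp add: inp_def)
    then obtain xs where "set xs \<subseteq> {..<2}" "bivalent k P inp xs"
      "\<not> bivalent k P inp (xs @ [0])" "\<not> bivalent k P inp (xs @ [1])"
      using critical_schedule_exists[OF consensus] by blast
    then show False
      using no_critical_schedule[OF consensus assms(1)] by blast
  qed
qed

end
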